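(* Let $X$ be a set and $GDNP(X)$ the free GDN-Poisson algebra on $X$ (with unit $e$ for $\cdot$). For any $u\in[X]$ and $a_1,\dots,a_n\in X$ with $n\ge1$, $$u\circ(a_1\cdots a_n)=\sum_{i=1}^n(u\,a_1\cdots\widehat{a_i}\cdots a_n)\circ a_i-(n-1)(u\,a_1\cdots a_n)\circ e,$$ where juxtaposition denotes the product $\cdot$ and $\widehat{a_i}$ means $a_i$ is omitted.
   Context: A GDN-Poisson algebra is a vector space with bilinear products $\cdot,\circ$ such that $(\cdot)$ is commutative associative with unit $e$, $x\circ(y\circ z)-(x\circ y)\circ z=y\circ(x\circ z)-(y\circ x)\circ z$, $(x\circ y)\circ z=(x\circ z)\circ y$, $(x\cdot y)\circ z=x\cdot(y\circ z)$, and $(x\circ y)\cdot z-x\circ(y\cdot z)=(y\circ x)\cdot z-y\circ(x\cdot z)$. $[X]$ denotes the free commutative monoid on $X$ with unit $e$, viewed inside $GDNP(X)$ as $\cdot$-products of generators. *)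

theory Defs
  imports Main "HOL.Vector_Spaces" "HOL-Library.Multiset"
begin

text \<open>A GDN-Poisson algebra over a field 'k: the carrier type 'a is a commutative
  ring with unit e = 1 (the product \<cdot> is the ring multiplication, which is
  k-bilinear via the algebra axiom below), scale is a k-vector-space structure,
  and circ is a k-bilinear product satisfying the GDN-Poisson identities.\<close>

definition GDNP_algebra ::
  "('k::field \<Rightarrow> 'a::comm_ring_1 \<Rightarrow> 'a) \<Rightarrow> ('a \<Rightarrow> 'a \<Rightarrow> 'a) \<Rightarrow> bool" where
  "GDNP_algebra scale circ \<longleftrightarrow>
     vector_space scale \<and>
     (\<forall>c x y. scale c (x * y) = scale c x * y) \<and>
     (\<forall>x y z. circ (x + y) z = circ x z + circ y z) \<and>
     (\<forall>x y z. circ x (y + z) = circ x y + circ x z) \<and>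
     (\<forall>c x y. circ (scale c x) y = scale c (circ x y)) \<and>
     (\<forall>c x y. circ x (scale c y) = scale c (circ x y)) \<and>
     (\<forall>x y z. circ x (circ y z) - circ (circ x y) z = circ y (circ x z) - circ (circ y x) z) \<and>
     (\<forall>x y z. circ (circ x y) z = circ (circ x z) y) \<and>
     (\<forall>x y z. circ (x * y) z = x * circ y z) \<and>
     (\<forall>x y z. circ x y * z - circ x (y * z) = circ y x * z - circ y (x * z))"

end

theory Submission
  imports Defs
begin

text \<open>Compatibility of the two products gives x \<circ> y = x \<cdot> D y with D = e \<circ> _, so the whole
  product \<circ> is controlled by the single map D. Taking x = e in the last GDN-Poisson identity
  shows D(yz) = z D y + y D z - yz D e, i.e. D - (\<cdot> D e) is a derivation. The formula is
  the Leibniz rule for such an affine derivation: the correction term yz D e is picked up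
  once per factor beyond the first, whence the coefficient n - 1.\<close>

lemma affine_derivation_prod:
  fixes D :: "'a::comm_ring_1 \<Rightarrow> 'a"
  assumes leibniz: "\<And>y z. D (y * z) = z * D y + y * D z - y * z * c"
    and "finite S" and "S \<noteq> {}"
  shows "D (\<Prod>i\<in>S. b i) =
           (\<Sum>i\<in>S. (\<Prod>j\<in>S - {i}. b j) * D (b i)) - of_nat (card S - 1) * ((\<Prod>i\<in>S. b i) * c)"
  using assms(2,3)
proof (induction S rule: finite_ne_induct)
  case (singleton x)
  then show ?case by simp
next
  case (insert x F)
  let ?P = "\<Prod>i\<in>F. b i"
  have "card F \<ge> 1"
    using insert.hyps(1,2) by (simp add: Suc_le_eq card_gt_0_iff)
  then have card_eq: "(of_nat (card F) :: 'a) = of_nat (card F - 1) + 1"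
    by (simp add: of_nat_diff)
  have rest: "(\<Prod>j\<in>insert x F - {i}. b j) = b x * (\<Prod>j\<in>F - {i}. b j)" if "i \<in> F" for i
  proof -
    have "insert x F - {i} = insert x (F - {i})" "x \<notin> F - {i}"
      using that insert.hyps(3) by auto
    then show ?thesis using insert.hyps(1) by simp
  qed
  have "D (\<Prod>i\<in>insert x F. b i) = ?P * D (b x) + b x * D ?P - b x * ?P * c"
    using insert.hyps by (simp add: leibniz)
  also have "\<dots> = ?P * D (b x) + (\<Sum>i\<in>F. b x * (\<Prod>j\<in>F - {i}. b j) * D (b i))
                 - of_nat (card F) * (b x * ?P * c)"
    unfolding insert.IH card_eq
    by (simp add: sum_distrib_left algebra_simps)
  also have "\<dots> = (\<Sum>i\<in>insert x F. (\<Prod>j\<in>insert x F - {i}. b j) * D (b i))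
                 - of_nat (card (insert x F) - 1) * ((\<Prod>i\<in>insert x F. b i) * c)"
    using insert.hyps by (simp add: rest mult.assoc)
  finally show ?case .
qed

context
  fixes scale :: "'k::field \<Rightarrow> 'a::comm_ring_1 \<Rightarrow> 'a"
    and circ :: "'a \<Rightarrow> 'a \<Rightarrow> 'a"
  assumes GDNP: "GDNP_algebra scale circ"
begin

lemma GDNP_circ_eq_mult_circ_one: "circ x y = x * circ 1 y"
  using GDNP unfolding GDNP_algebra_def by (metis mult.right_neutral)

lemma GDNP_circ_one_mult:
  "circ 1 (y * z) = z * circ 1 y + y * circ 1 z - y * z * circ 1 1"
proof -
  have "circ 1 y * z - circ 1 (y * z) = circ y 1 * z - circ y z"
    using GDNP unfolding GDNP_algebra_def by (metis mult_1_left)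
  then show ?thesis
    by (simp add: GDNP_circ_eq_mult_circ_one[of y] algebra_simps)
qed

lemma GDNP_circ_prod:
  assumes "finite S" and "S \<noteq> {}"
  shows "circ x (\<Prod>i\<in>S. b i) =
           (\<Sum>i\<in>S. circ (x * (\<Prod>j\<in>S - {i}. b j)) (b i))
           - of_nat (card S - 1) * circ (x * (\<Prod>i\<in>S. b i)) 1"
  using affine_derivation_prod[OF GDNP_circ_one_mult assms, of b]
  by (simp add: GDNP_circ_eq_mult_circ_one[of x] GDNP_circ_eq_mult_circ_one[of "x * _"]
                right_diff_distrib sum_distrib_left mult.assoc mult.left_commute)

end

theorem mainTheorem4:
  fixes scale :: "'k::field \<Rightarrow> 'a::comm_ring_1 \<Rightarrow> 'a"
    and circ :: "'a \<Rightarrow> 'a \<Rightarrow> 'a"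
    and gen :: "'x \<Rightarrow> 'a"
    and u :: "'x multiset"
    and a :: "nat \<Rightarrow> 'x"
    and n :: nat
  assumes "GDNP_algebra scale circ"
    and "n \<ge> 1"
  shows "circ (prod_mset (image_mset gen u)) (\<Prod>i\<in>{1..n}. gen (a i)) =
           (\<Sum>i\<in>{1..n}. circ (prod_mset (image_mset gen u) * (\<Prod>j\<in>{1..n} - {i}. gen (a j))) (gen (a i)))
           - of_nat (n - 1) * circ (prod_mset (image_mset gen u) * (\<Prod>i\<in>{1..n}. gen (a i))) 1"
  using GDNP_circ_prod[OF assms(1), of "{1..n}" "prod_mset (image_mset gen u)" "\<lambda>i. gen (a i)"]
    assms(2)
  by simp

end
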